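(* Let $\pi$ be a uniformly $\rho$-robust, cost-invariant oracle for an objective $\boldsymbol{\mathcal{G}}$ with mistake constant $M^\pi_\rho$. Let $(\boldsymbol{x},\boldsymbol{u})$ be a trajectory and $\mathcal{I}=[t_1,t_2]$ a time interval such that the restriction $(x_{\mathcal{I}},u_{\mathcal{I}})$ belongs to $\bigcup_{\theta\in\mathsf{K}}\mathcal{S}_{\mathcal{I}}[\rho;\theta]$. Then: (i) if $s\in\mathcal{I}$, $s<t_2$, and $\mathcal{G}_s(x_s,u_s)=0$, then $\mathcal{G}_{s+1}(x_{s+1},u_{s+1})=0$; (ii) $\mathcal{G}_s(x_s,u_s)=0$ for all $s$ with $t_1+M^\pi_\rho\le s\le t_2$; (iii) if $\mathcal{G}_{t_1}(x_{t_1},u_{t_1})=0$ then $\sum_{t\in\mathcal{I}}\mathcal{G}_t(x_t,u_t)=0$; (iv) if $\mathcal{G}_{t_2}(x_{t_2},u_{t_2})=1$ then $|\mathcal{I}|\le M^\pi_\rho$.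
   Context: $\mathcal{X}$ (normed) and $\mathcal{U}$ are sets; $\mathcal{F}$ is a set of functions $\mathbb{N}\times\mathcal{X}\times\mathcal{U}\to\mathcal{X}$ with compact parametrization $(\mathbb{T},\mathsf{K},d)$: $(\mathsf{K},d)$ compact metric, $\mathbb{T}:\mathsf{K}\to2^{\mathcal{F}}$, $\mathcal{F}\subseteq\bigcup_\theta\mathbb{T}[\theta]$. An objective is a sequence $\mathcal{G}_t:\mathcal{X}\times\mathcal{U}\to\{0,1\}$; $\pi:\mathsf{K}\to\mathcal{C}$ with $\mathcal{C}$ the maps $\mathbb{N}\times\mathcal{X}\to\mathcal{U}$. For $\mathcal{I}=[t_1,t_2]$, $\theta\in\mathsf{K}$: $\mathcal{S}_{\mathcal{I}}[\rho;\theta]$ is the set of pairs $(x_{t_1..t_2}),(u_{t_1..t_2})$ for which there exist $f\in\mathbb{T}[\theta]$ and $\theta_k$ with $d(\theta_k,\theta)\le\rho$ such that $u_k=\pi[\theta_k](k,x_k)$ ($k\in\mathcal{I}$) and $x_{k+1}=f(k,x_k,u_k)$ ($k<t_2$). $m^\pi_\rho(\gamma;\theta)=\sup_{\mathcal{I}=[t,t'],t<t'}\sup\{\sum_{s\in\mathcal{I}}\mathcal{G}_s(x_s,u_s):(x_{\mathcal{I}},u_{\mathcal{I}})\in\mathcal{S}_{\mathcal{I}}[\rho;\theta],\|x_t\|\le\gamma\}$; $\pi$ is an oracle if $m^\pi_0<\infty$ everywhere, uniformly $\rho$-robust if $M^\pi_\rho:=\sup_{\gamma,\theta}m^\pi_\rho(\gamma;\theta)<\infty$.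 With $\mathsf{X}_t=\{x:\exists u,\mathcal{G}_t(x,u)=0\}$, cost invariance means: for all $\theta\in\mathsf{K},t\ge0$, $\mathcal{G}_t(x,\pi[\theta](t,x))=0$ for $x\in\mathsf{X}_t$, and $f(t,x,\pi[\theta'](t,x))\in\mathsf{X}_{t+1}$ for $x\in\mathsf{X}_t$, $f\in\mathbb{T}[\theta]$, $d(\theta',\theta)\le\rho$. *)

theory Defs
  imports "HOL-Analysis.Analysis" "HOL-Library.Extended_Nat"
begin

definition compact_param ::
  "'k::metric_space set \<Rightarrow> ('k \<Rightarrow> (nat \<Rightarrow> 'x \<Rightarrow> 'u \<Rightarrow> 'x) set)
     \<Rightarrow> (nat \<Rightarrow> 'x \<Rightarrow> 'u \<Rightarrow> 'x) set \<Rightarrow> bool" where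
  "compact_param K T F \<longleftrightarrow> compact K \<and> F \<subseteq> (\<Union>\<theta>\<in>K. T \<theta>)"

definition objective :: "(nat \<Rightarrow> 'x \<Rightarrow> 'u \<Rightarrow> nat) \<Rightarrow> bool" where
  "objective G \<longleftrightarrow> (\<forall>t x u. G t x u \<in> {0, 1})"

definition in_S ::
  "'k::metric_space set \<Rightarrow> ('k \<Rightarrow> (nat \<Rightarrow> 'x \<Rightarrow> 'u \<Rightarrow> 'x) set) \<Rightarrow> ('k \<Rightarrow> nat \<Rightarrow> 'x \<Rightarrow> 'u)
     \<Rightarrow> real \<Rightarrow> 'k \<Rightarrow> nat \<Rightarrow> nat \<Rightarrow> (nat \<Rightarrow> 'x) \<Rightarrow> (nat \<Rightarrow> 'u) \<Rightarrow> bool" where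
  "in_S K T \<pi> \<rho> \<theta> t1 t2 x u \<longleftrightarrow>
     (\<exists>f\<in>T \<theta>. \<exists>\<theta>s :: nat \<Rightarrow> 'k.
        (\<forall>k\<in>{t1..t2}. \<theta>s k \<in> K \<and> dist (\<theta>s k) \<theta> \<le> \<rho> \<and> u k = \<pi> (\<theta>s k) k (x k)) \<and>
        (\<forall>k. t1 \<le> k \<and> k < t2 \<longrightarrow> x (Suc k) = f k (x k) (u k)))"

definition mistakes ::
  "'k::metric_space set \<Rightarrow> ('k \<Rightarrow> (nat \<Rightarrow> 'x::real_normed_vector \<Rightarrow> 'u \<Rightarrow> 'x) set)
     \<Rightarrow> (nat \<Rightarrow> 'x \<Rightarrow> 'u \<Rightarrow> nat) \<Rightarrow> ('k \<Rightarrow> nat \<Rightarrow> 'x \<Rightarrow> 'u) \<Rightarrow> real \<Rightarrow> real \<Rightarrow> 'k \<Rightarrow> enat" where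
  "mistakes K T G \<pi> \<rho> \<gamma> \<theta> =
     Sup {enat (\<Sum>s\<in>{t..t'}. G s (x s) (u s)) | t t' x u.
            t < t' \<and> in_S K T \<pi> \<rho> \<theta> t t' x u \<and> norm (x t) \<le> \<gamma>}"

definition mistake_const ::
  "'k::metric_space set \<Rightarrow> ('k \<Rightarrow> (nat \<Rightarrow> 'x::real_normed_vector \<Rightarrow> 'u \<Rightarrow> 'x) set)
     \<Rightarrow> (nat \<Rightarrow> 'x \<Rightarrow> 'u \<Rightarrow> nat) \<Rightarrow> ('k \<Rightarrow> nat \<Rightarrow> 'x \<Rightarrow> 'u) \<Rightarrow> real \<Rightarrow> enat" where
  "mistake_const K T G \<pi> \<rho> = Sup {mistakes K T G \<pi> \<rho> \<gamma> \<theta> | \<gamma> \<theta>. \<theta> \<in> K}"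

definition is_orcl where
  "is_orcl K T G \<pi> \<longleftrightarrow> (\<forall>\<gamma> \<theta>. \<theta> \<in> K \<longrightarrow> mistakes K T G \<pi> 0 \<gamma> \<theta> < \<infinity>)"

definition uniformly_robust where
  "uniformly_robust K T G \<pi> \<rho> \<longleftrightarrow> mistake_const K T G \<pi> \<rho> < \<infinity>"

definition good_set :: "(nat \<Rightarrow> 'x \<Rightarrow> 'u \<Rightarrow> nat) \<Rightarrow> nat \<Rightarrow> 'x set" where
  "good_set G t = {x. \<exists>u. G t x u = 0}"

definition cost_invariant ::
  "'k::metric_space set \<Rightarrow> ('k \<Rightarrow> (nat \<Rightarrow> 'x \<Rightarrow> 'u \<Rightarrow> 'x) set)
     \<Rightarrow> (nat \<Rightarrow> 'x \<Rightarrow> 'u \<Rightarrow> nat) \<Rightarrow> ('k \<Rightarrow> nat \<Rightarrow> 'x \<Rightarrow> 'u) \<Rightarrow> real \<Rightarrow> bool" where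
  "cost_invariant K T G \<pi> \<rho> \<longleftrightarrow>
     (\<forall>\<theta>\<in>K. \<forall>t. \<forall>x\<in>good_set G t.
        G t x (\<pi> \<theta> t x) = 0 \<and>
        (\<forall>f\<in>T \<theta>. \<forall>\<theta>'\<in>K. dist \<theta>' \<theta> \<le> \<rho> \<longrightarrow> f t x (\<pi> \<theta>' t x) \<in> good_set G (Suc t)))"

end

theory Submission
  imports Defs
begin

text \<open>Cost invariance makes the zero-cost region forward invariant along every trajectory
  admitted by \<^const>\<open>in_S\<close>, so on \<open>[t1, t2]\<close> the cost is \<open>1\<close> up to some time and \<open>0\<close>
  from then on. If the cost at \<open>s\<close> is \<open>1\<close>, the restriction to \<open>[t1, s]\<close> is again an admissible
  trajectory whose total cost is its length \<open>s + 1 - t1\<close>, and this is bounded by the mistake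
  constant.\<close>

lemma in_SE:
  assumes "in_S K T \<pi> \<rho> \<theta> t1 t2 x u"
  obtains f \<theta>s where "f \<in> T \<theta>"
    and "\<And>k. k \<in> {t1..t2} \<Longrightarrow> \<theta>s k \<in> K \<and> dist (\<theta>s k) \<theta> \<le> \<rho> \<and> u k = \<pi> (\<theta>s k) k (x k)"
    and "\<And>k. t1 \<le> k \<Longrightarrow> k < t2 \<Longrightarrow> x (Suc k) = f k (x k) (u k)"
  using assms unfolding in_S_def by blast

lemma in_S_mono:
  assumes "in_S K T \<pi> \<rho> \<theta> t1 t2 x u" "t1 \<le> t1'" "t2' \<le> t2"
  shows "in_S K T \<pi> \<rho> \<theta> t1' t2' x u"
proof -
  from assms(1) obtain f \<theta>s where "f \<in> T \<theta>"
    and "\<And>k. k \<in> {t1..t2} \<Longrightarrow> \<theta>s k \<in> K \<and> dist (\<theta>s k) \<theta> \<le> \<rho> \<and> u k = \<pi> (\<theta>s k) k (x k)"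
    and "\<And>k. t1 \<le> k \<Longrightarrow> k < t2 \<Longrightarrow> x (Suc k) = f k (x k) (u k)"
    by (erule in_SE)
  then show ?thesis
    using assms(2,3) unfolding in_S_def by (intro bexI[of _ f] exI[of _ \<theta>s]) auto
qed

text \<open>Since \<^const>\<open>mistakes\<close> only counts intervals \<open>[t, t']\<close> with \<open>t < t'\<close>, a trajectory on a
  single instant has to be prolonged before its cost can be bounded. The extra step applies
  the nominal policy \<open>\<pi> \<theta>\<close>, admissible because \<open>dist \<theta> \<theta> = 0 \<le> \<rho>\<close>.\<close>

lemma in_S_extend:
  assumes "in_S K T \<pi> \<rho> \<theta> t1 t2 x u" "\<theta> \<in> K" "\<rho> \<ge> 0"
  obtains x' u' where "in_S K T \<pi> \<rho> \<theta> t1 (Suc t2) x' u'" "\<And>t. t \<le> t2 \<Longrightarrow> x' t = x t \<and> u' t = u t"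
proof -
  from assms(1) obtain f \<theta>s where f: "f \<in> T \<theta>"
    and ctrl: "\<And>k. k \<in> {t1..t2} \<Longrightarrow> \<theta>s k \<in> K \<and> dist (\<theta>s k) \<theta> \<le> \<rho> \<and> u k = \<pi> (\<theta>s k) k (x k)"
    and dyn: "\<And>k. t1 \<le> k \<Longrightarrow> k < t2 \<Longrightarrow> x (Suc k) = f k (x k) (u k)"
    by (erule in_SE)
  define x' where "x' = x(Suc t2 := f t2 (x t2) (u t2))"
  define u' where "u' = u(Suc t2 := \<pi> \<theta> (Suc t2) (x' (Suc t2)))"
  have "in_S K T \<pi> \<rho> \<theta> t1 (Suc t2) x' u'"
    unfolding in_S_def
  proof (intro bexI[OF _ f] exI[of _ "\<theta>s(Suc t2 := \<theta>)"] conjI ballI allI impI)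
    fix k assume "k \<in> {t1..Suc t2}"
    then show "(\<theta>s(Suc t2 := \<theta>)) k \<in> K" "dist ((\<theta>s(Suc t2 := \<theta>)) k) \<theta> \<le> \<rho>"
      "u' k = \<pi> ((\<theta>s(Suc t2 := \<theta>)) k) k (x' k)"
      using ctrl assms(2,3) by (auto simp: u'_def x'_def le_Suc_eq)
  next
    fix k assume "t1 \<le> k \<and> k < Suc t2"
    then show "x' (Suc k) = f k (x' k) (u' k)"
      using dyn by (auto simp: x'_def u'_def less_Suc_eq)
  qed
  moreover have "x' t = x t \<and> u' t = u t" if "t \<le> t2" for t
    using that by (simp add: x'_def u'_def)
  ultimately show thesis by (rule that)
qed

lemma sum_cost_le_mistakes:
  assumes "t < t'" "in_S K T \<pi> \<rho> \<theta> t t' x u"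
  shows "enat (\<Sum>s\<in>{t..t'}. G s (x s) (u s)) \<le> mistakes K T G \<pi> \<rho> (norm (x t)) \<theta>"
  unfolding mistakes_def by (rule Sup_upper) (use assms in blast)

lemma mistakes_le_mistake_const:
  assumes "\<theta> \<in> K"
  shows "mistakes K T G \<pi> \<rho> \<gamma> \<theta> \<le> mistake_const K T G \<pi> \<rho>"
  unfolding mistake_const_def by (rule Sup_upper) (use assms in blast)

lemma in_S_sum_cost_le_mistake_const:
  assumes S: "in_S K T \<pi> \<rho> \<theta> t1 t2 x u" and "\<theta> \<in> K" "\<rho> \<ge> 0" "t1 \<le> t2"
  shows "enat (\<Sum>t\<in>{t1..t2}. G t (x t) (u t)) \<le> mistake_const K T G \<pi> \<rho>"
proof -
  obtain x' u' where S': "in_S K T \<pi> \<rho> \<theta> t1 (Suc t2) x' u'"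
    and agree: "\<And>t. t \<le> t2 \<Longrightarrow> x' t = x t \<and> u' t = u t"
    using in_S_extend[OF assms(1-3)] by blast
  have "(\<Sum>t\<in>{t1..t2}. G t (x t) (u t)) = (\<Sum>t\<in>{t1..t2}. G t (x' t) (u' t))"
    using agree by (intro sum.cong) auto
  also have "\<dots> \<le> (\<Sum>t\<in>{t1..Suc t2}. G t (x' t) (u' t))"
    by (rule sum_mono2) auto
  finally have "enat (\<Sum>t\<in>{t1..t2}. G t (x t) (u t)) \<le> enat (\<Sum>t\<in>{t1..Suc t2}. G t (x' t) (u' t))"
    by simp
  also have "\<dots> \<le> mistake_const K T G \<pi> \<rho>"
    using sum_cost_le_mistakes[OF _ S'] mistakes_le_mistake_const[OF \<open>\<theta> \<in> K\<close>] \<open>t1 \<le> t2\<close>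
    by (meson le_imp_less_Suc order_trans)
  finally show ?thesis .
qed

lemma cost_invariant_zero_Suc:
  assumes inv: "cost_invariant K T G \<pi> \<rho>" and "\<theta> \<in> K"
    and S: "in_S K T \<pi> \<rho> \<theta> t1 t2 x u"
    and s: "t1 \<le> s" "s < t2" and zero: "G s (x s) (u s) = 0"
  shows "G (Suc s) (x (Suc s)) (u (Suc s)) = 0"
proof -
  from S obtain f \<theta>s where f: "f \<in> T \<theta>"
    and ctrl: "\<And>k. k \<in> {t1..t2} \<Longrightarrow> \<theta>s k \<in> K \<and> dist (\<theta>s k) \<theta> \<le> \<rho> \<and> u k = \<pi> (\<theta>s k) k (x k)"
    and dyn: "\<And>k. t1 \<le> k \<Longrightarrow> k < t2 \<Longrightarrow> x (Suc k) = f k (x k) (u k)"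
    by (erule in_SE)
  have "x s \<in> good_set G s"
    using zero unfolding good_set_def by blast
  then have "f s (x s) (u s) \<in> good_set G (Suc s)"
    using inv \<open>\<theta> \<in> K\<close> f ctrl s unfolding cost_invariant_def by auto
  then have "x (Suc s) \<in> good_set G (Suc s)"
    using dyn s by auto
  then show ?thesis
    using inv ctrl s unfolding cost_invariant_def by auto
qed

lemma cost_invariant_zero_persists:
  assumes inv: "cost_invariant K T G \<pi> \<rho>" and "\<theta> \<in> K"
    and S: "in_S K T \<pi> \<rho> \<theta> t1 t2 x u"
    and "t1 \<le> r" "r \<le> s" "s \<le> t2" and zero: "G r (x r) (u r) = 0"
  shows "G s (x s) (u s) = 0"
  using \<open>r \<le> s\<close> \<open>s \<le> t2\<close>
proof (induction s rule: dec_induct)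
  case base
  show ?case using zero .
next
  case (step n)
  then show ?case
    using cost_invariant_zero_Suc[OF inv \<open>\<theta> \<in> K\<close> S] \<open>t1 \<le> r\<close> by simp
qed

lemma cost_one_run_le_mistake_const:
  assumes "objective G" "cost_invariant K T G \<pi> \<rho>" "\<theta> \<in> K" "\<rho> \<ge> 0"
    and S: "in_S K T \<pi> \<rho> \<theta> t1 t2 x u"
    and "t1 \<le> s" "s \<le> t2" and one: "G s (x s) (u s) = 1"
  shows "enat (card {t1..s}) \<le> mistake_const K T G \<pi> \<rho>"
proof -
  have "G r (x r) (u r) = 1" if "r \<in> {t1..s}" for r
    using cost_invariant_zero_persists[OF assms(2,3) S, of r s] that \<open>s \<le> t2\<close> one
      \<open>objective G\<close> unfolding objective_def by force
  then have "(\<Sum>t\<in>{t1..s}. G t (x t) (u t)) = card {t1..s}"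
    by simp
  then show ?thesis
    using in_S_sum_cost_le_mistake_const[where G = G, OF in_S_mono[OF S order_refl \<open>s \<le> t2\<close>]
        assms(3,4) \<open>t1 \<le> s\<close>]
    by simp
qed

theorem mainTheorem12:
  fixes K :: "'k::metric_space set"
    and T :: "'k \<Rightarrow> (nat \<Rightarrow> 'x::real_normed_vector \<Rightarrow> 'u \<Rightarrow> 'x) set"
    and F :: "(nat \<Rightarrow> 'x \<Rightarrow> 'u \<Rightarrow> 'x) set"
    and G :: "nat \<Rightarrow> 'x \<Rightarrow> 'u \<Rightarrow> nat"
    and \<pi> :: "'k \<Rightarrow> nat \<Rightarrow> 'x \<Rightarrow> 'u"
    and \<rho> :: real
    and x :: "nat \<Rightarrow> 'x" and u :: "nat \<Rightarrow> 'u"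
    and t1 t2 :: nat
  assumes param: "compact_param K T F"
    and obj: "objective G"
    and rho: "\<rho> \<ge> 0"
    and orc: "is_orcl K T G \<pi>"
    and robust: "uniformly_robust K T G \<pi> \<rho>"
    and inv: "cost_invariant K T G \<pi> \<rho>"
    and I: "t1 \<le> t2"
    and traj: "\<exists>\<theta>\<in>K. in_S K T \<pi> \<rho> \<theta> t1 t2 x u"
  shows "(\<forall>s. t1 \<le> s \<and> s < t2 \<and> G s (x s) (u s) = 0 \<longrightarrow> G (Suc s) (x (Suc s)) (u (Suc s)) = 0)
    \<and> (\<forall>s. enat t1 + mistake_const K T G \<pi> \<rho> \<le> enat s \<and> s \<le> t2 \<longrightarrow> G s (x s) (u s) = 0)
    \<and> (G t1 (x t1) (u t1) = 0 \<longrightarrow> (\<Sum>t\<in>{t1..t2}. G t (x t) (u t)) = 0)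
    \<and> (G t2 (x t2) (u t2) = 1 \<longrightarrow> enat (card {t1..t2}) \<le> mistake_const K T G \<pi> \<rho>)"
proof -
  from traj obtain \<theta> where "\<theta> \<in> K" and S: "in_S K T \<pi> \<rho> \<theta> t1 t2 x u" by blast
  let ?M = "mistake_const K T G \<pi> \<rho>"
  note run_bound = cost_one_run_le_mistake_const[OF obj inv \<open>\<theta> \<in> K\<close> rho S]
  have late_zero: "G s (x s) (u s) = 0" if late: "enat t1 + ?M \<le> enat s" and "s \<le> t2" for s
  proof (rule ccontr)
    assume "G s (x s) (u s) \<noteq> 0"
    moreover have "t1 \<le> s"
      using late by (metis enat_ord_simps(1) le_iff_add order_trans)
    ultimately have "enat (Suc s - t1) \<le> ?M"
      using run_bound[OF _ \<open>s \<le> t2\<close>] obj unfolding objective_def by force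
    then have "enat t1 + enat (Suc s - t1) \<le> enat s"
      using late by (meson add_left_mono order_trans)
    with \<open>t1 \<le> s\<close> show False by simp
  qed
  show ?thesis
    using cost_invariant_zero_Suc[OF inv \<open>\<theta> \<in> K\<close> S] late_zero
      cost_invariant_zero_persists[OF inv \<open>\<theta> \<in> K\<close> S, of t1] run_bound[OF I order_refl]
    by auto
qed

end
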